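(* Let $\Omega\subset\mathbb{R}^d$ be a bounded domain with Lipschitz boundary, $\partial\Omega=\overline{\Gamma_D}\cup\overline{\Gamma_N}$ with $\Gamma_D,\Gamma_N$ relatively open and disjoint. Let $\mathcal{A}\in[L^\infty(\Omega)]^{d\times d}$ be symmetric and uniformly positive definite, and $c\in L^\infty(\Omega)$, $\alpha\in L^\infty(\Gamma_N)$ nonnegative. Let $V=H^1_{\Gamma_D}(\Omega)=\{v\in H^1(\Omega): v=0\text{ on }\Gamma_D\}$ and $a(u,v)=(\mathcal{A}\nabla u,\nabla v)+(cu,v)+(\alpha u,v)_{L^2(\Gamma_N)}$, and assume $a(\cdot,\cdot)$ is a scalar product on $V$, with norm $|||v|||=a(v,v)^{1/2}$. Let $C_F$ be the smallest constant such that $\|v\|_{L^2(\Omega)}\le C_F|||v|||$ for all $v\in V$. Let $u_*\in V$, $\lambda_*\in\mathbb{R}$, and let $w\in V$ satisfy $$a(w,v)=a(u_*,v)-\lambda_*(u_*,v)\quad\forall v\in V.$$ Then $$|||w|||\le\|\nabla u_*-\mathcal{A}^{-1}\mathbf{q}\|_{\mathcal{A}}+C_F\|\lambda_*u_*-cu_*+\operatorname{div}\mathbf{q}\|_{L^2(\Omega)}\quad\forall\mathbf{q}\in W,$$ where $W=\{\mathbf{q}\in H(\operatorname{div},\Omega):\mathbf{q}\cdot\mathbf{n}=-\alpha u_*\text{ on }\Gamma_N\}$.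
   Context: $(\cdot,\cdot)$ is the $L^2(\Omega)$ scalar product; $H(\operatorname{div},\Omega)$ is the space of $[L^2(\Omega)]^d$ vector fields with square integrable weak divergence; $\mathbf{n}$ is the unit outward normal to $\partial\Omega$; $\|\mathbf{q}\|_{\mathcal{A}}^2=(\mathcal{A}\mathbf{q},\mathbf{q})$. *)

theory Defs
  imports "HOL-Analysis.Analysis"
begin

definition pd :: "'d::finite \<Rightarrow> (real^'d \<Rightarrow> real) \<Rightarrow> real^'d \<Rightarrow> real" where
  "pd i f x = frechet_derivative f (at x) (axis i 1)"

definition cgrad :: "(real^'d::finite \<Rightarrow> real) \<Rightarrow> real^'d \<Rightarrow> real^'d" where
  "cgrad f x = (\<chi> i. pd i f x)"

coinductive smooth :: "(real^'d::finite \<Rightarrow> real) \<Rightarrow> bool" where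
  "f differentiable_on UNIV \<Longrightarrow> (\<forall>i. smooth (pd i f)) \<Longrightarrow> smooth f"

definition test_fn :: "(real^'d::finite) set \<Rightarrow> (real^'d \<Rightarrow> real) \<Rightarrow> bool" where
  "test_fn \<Omega> \<phi> \<longleftrightarrow> smooth \<phi> \<and> compact (closure {x. \<phi> x \<noteq> 0}) \<and> closure {x. \<phi> x \<noteq> 0} \<subseteq> \<Omega>"

definition L2 :: "'a measure \<Rightarrow> ('a \<Rightarrow> real) \<Rightarrow> bool" where
  "L2 M f \<longleftrightarrow> f \<in> borel_measurable M \<and> integrable M (\<lambda>x. (f x)^2)"

definition L2norm :: "'a measure \<Rightarrow> ('a \<Rightarrow> real) \<Rightarrow> real" where
  "L2norm M f = sqrt (LINT x|M. (f x)^2)"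

definition weak_grad :: "(real^'d::finite) set \<Rightarrow> (real^'d \<Rightarrow> real) \<Rightarrow> (real^'d \<Rightarrow> real^'d) \<Rightarrow> bool" where
  "weak_grad \<Omega> u G \<longleftrightarrow> (\<forall>i. L2 (lebesgue_on \<Omega>) (\<lambda>x. G x $ i)) \<and>
     (\<forall>\<phi>. test_fn \<Omega> \<phi> \<longrightarrow> (\<forall>i. (LINT x|lebesgue_on \<Omega>. u x * pd i \<phi> x)
                                 = - (LINT x|lebesgue_on \<Omega>. G x $ i * \<phi> x)))"

definition H1 :: "(real^'d::finite) set \<Rightarrow> (real^'d \<Rightarrow> real) \<Rightarrow> bool" where
  "H1 \<Omega> u \<longleftrightarrow> L2 (lebesgue_on \<Omega>) u \<and> (\<exists>G. weak_grad \<Omega> u G)"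

definition wgrad :: "(real^'d::finite) set \<Rightarrow> (real^'d \<Rightarrow> real) \<Rightarrow> real^'d \<Rightarrow> real^'d" where
  "wgrad \<Omega> u = (SOME G. weak_grad \<Omega> u G)"

definition weak_div :: "(real^'d::finite) set \<Rightarrow> (real^'d \<Rightarrow> real^'d) \<Rightarrow> (real^'d \<Rightarrow> real) \<Rightarrow> bool" where
  "weak_div \<Omega> q D \<longleftrightarrow> (\<forall>\<phi>. test_fn \<Omega> \<phi> \<longrightarrow>
      (LINT x|lebesgue_on \<Omega>. q x \<bullet> cgrad \<phi> x) = - (LINT x|lebesgue_on \<Omega>. D x * \<phi> x))"

definition Hdiv :: "(real^'d::finite) set \<Rightarrow> (real^'d \<Rightarrow> real^'d) \<Rightarrow> (real^'d \<Rightarrow> real) \<Rightarrow> bool" where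
  "Hdiv \<Omega> q D \<longleftrightarrow> (\<forall>i. L2 (lebesgue_on \<Omega>) (\<lambda>x. q x $ i)) \<and> L2 (lebesgue_on \<Omega>) D \<and> weak_div \<Omega> q D"

definition lipschitz_domain :: "(real^'d::finite) set \<Rightarrow> bool" where
  "lipschitz_domain \<Omega> \<longleftrightarrow> open \<Omega> \<and> connected \<Omega> \<and> \<Omega> \<noteq> {} \<and> bounded \<Omega> \<and>
    (\<forall>p\<in>frontier \<Omega>. \<exists>e r h L g. norm e = 1 \<and> r > 0 \<and> h > 0 \<and>
        L-lipschitz_on UNIV (g :: real^'d \<Rightarrow> real) \<and>
        (let U = {x. norm ((x - p) - ((x - p) \<bullet> e) *\<^sub>R e) < r \<and> \<bar>(x - p) \<bullet> e\<bar> < h}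
         in \<Omega> \<inter> U = {x\<in>U. x \<bullet> e < g (x - (x \<bullet> e) *\<^sub>R e)}))"

definition hausdorff_pre :: "nat \<Rightarrow> real \<Rightarrow> ('a::metric_space) set \<Rightarrow> ennreal" where
  "hausdorff_pre s \<delta> A = (INF C \<in> {C :: nat \<Rightarrow> 'a set. A \<subseteq> (\<Union>n. C n) \<and>
        (\<forall>n. bounded (C n) \<and> diameter (C n) \<le> \<delta>)}.
     (\<Sum>n. ennreal (if C n = {} then 0
                     else pi powr (real s / 2) / Gamma (real s / 2 + 1) * (diameter (C n) / 2) ^ s)))"

definition hausdorff_outer :: "nat \<Rightarrow> ('a::metric_space) set \<Rightarrow> ennreal" where
  "hausdorff_outer s A = (SUP \<delta> \<in> {0<..}. hausdorff_pre s \<delta> A)"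

definition hausdorff_measure :: "nat \<Rightarrow> ('a::metric_space) measure" where
  "hausdorff_measure s = measure_of UNIV (sets borel) (hausdorff_outer s)"

definition surface :: "(real^'d::finite) set \<Rightarrow> (real^'d) measure" where
  "surface \<Omega> = restrict_space (hausdorff_measure (CARD('d) - 1)) (frontier \<Omega>)"

definition is_trace :: "(real^'d::finite) set \<Rightarrow> (real^'d \<Rightarrow> real) \<Rightarrow> (real^'d \<Rightarrow> real) \<Rightarrow> bool" where
  "is_trace \<Omega> u g \<longleftrightarrow> H1 \<Omega> u \<and> L2 (surface \<Omega>) g \<and>
     (\<exists>\<phi> :: nat \<Rightarrow> real^'d \<Rightarrow> real. (\<forall>n. smooth (\<phi> n)) \<and>
        (\<lambda>n. (LINT x|lebesgue_on \<Omega>. (\<phi> n x - u x)^2)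
            + (LINT x|lebesgue_on \<Omega>. (norm (cgrad (\<phi> n) x - wgrad \<Omega> u x))^2)) \<longlonglongrightarrow> 0 \<and>
        (\<lambda>n. LINT x|surface \<Omega>. (\<phi> n x - g x)^2) \<longlonglongrightarrow> 0)"

definition tr :: "(real^'d::finite) set \<Rightarrow> (real^'d \<Rightarrow> real) \<Rightarrow> real^'d \<Rightarrow> real" where
  "tr \<Omega> u = (SOME g. is_trace \<Omega> u g)"

definition H1_0 :: "(real^'d::finite) set \<Rightarrow> (real^'d) set \<Rightarrow> (real^'d \<Rightarrow> real) set" where
  "H1_0 \<Omega> \<Gamma>D = {v. H1 \<Omega> v \<and> (\<exists>g. is_trace \<Omega> v g \<and> (AE x in surface \<Omega>. x \<in> \<Gamma>D \<longrightarrow> g x = 0))}"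

definition aform :: "(real^'d::finite) set \<Rightarrow> (real^'d \<Rightarrow> real^'d^'d) \<Rightarrow> (real^'d \<Rightarrow> real)
   \<Rightarrow> (real^'d \<Rightarrow> real) \<Rightarrow> (real^'d) set \<Rightarrow> (real^'d \<Rightarrow> real) \<Rightarrow> (real^'d \<Rightarrow> real) \<Rightarrow> real" where
  "aform \<Omega> A c \<alpha> \<Gamma>N u v =
     (LINT x|lebesgue_on \<Omega>. (A x *v wgrad \<Omega> u x) \<bullet> wgrad \<Omega> v x)
   + (LINT x|lebesgue_on \<Omega>. c x * u x * v x)
   + (LINT x|surface \<Omega>. indicator \<Gamma>N x * \<alpha> x * tr \<Omega> u x * tr \<Omega> v x)"

definition Anorm :: "(real^'d::finite) set \<Rightarrow> (real^'d \<Rightarrow> real^'d^'d) \<Rightarrow> (real^'d \<Rightarrow> real^'d) \<Rightarrow> real" where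
  "Anorm \<Omega> A q = sqrt (LINT x|lebesgue_on \<Omega>. (A x *v q x) \<bullet> q x)"

end

theory Submission
  imports Defs
begin

text \<open>
  Testing the defining equation of \<open>w\<close> with \<open>v = w\<close> and the boundary identity of the flux
  \<open>q\<close> with the same \<open>v = w\<close> gives
  \<open>|||w|||\<^sup>2 = (\<A>(\<nabla>u - \<A>\<^sup>-\<^sup>1q), \<nabla>w) - (\<lambda>u - cu + div q, w)\<close>.
  The Cauchy--Schwarz inequality for the inner product \<open>(\<A>\<cdot>,\<cdot>)\<close> bounds the first term by
  \<open>\<parallel>\<nabla>u - \<A>\<^sup>-\<^sup>1q\<parallel>\<^sub>\<A> |||w|||\<close>, the one in \<open>L\<^sup>2\<close> together with the Friedrichs constant bounds
  the second by \<open>C\<^sub>F \<parallel>\<lambda>u - cu + div q\<parallel> |||w|||\<close>; dividing by \<open>|||w|||\<close> gives the estimate.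
  Both Cauchy--Schwarz inequalities come from the AM--GM bound \<open>2|b| \<le> t a + s/t\<close>,
  optimised over \<open>t > 0\<close>.
\<close>

lemma two_mult_le_scaled_squares:
  fixes x y t :: real
  assumes "t > 0"
  shows "2 * x * y \<le> t * x\<^sup>2 + y\<^sup>2 / t"
proof -
  have "0 \<le> (t * x - y)\<^sup>2" by simp
  then have "2 * t * x * y \<le> t * t * x\<^sup>2 + y\<^sup>2" by (simp add: power2_eq_square algebra_simps)
  then show ?thesis using assms by (simp add: divide_simps power2_eq_square algebra_simps)
qed

lemma abs_le_sqrt_mult_sqrtI:
  fixes a s b :: real
  assumes amgm: "\<And>t. t > 0 \<Longrightarrow> 2 * \<bar>b\<bar> \<le> t * a + s / t" and "a \<ge> 0" "s \<ge> 0"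
  shows "\<bar>b\<bar> \<le> sqrt a * sqrt s"
proof (cases "a > 0 \<and> s > 0")
  case True
  define t where "t = sqrt s / sqrt a"
  have "sqrt a * sqrt a = a" "sqrt s * sqrt s = s" using True by simp_all
  then have "t > 0" "t * a = sqrt a * sqrt s" "s / t = sqrt a * sqrt s"
    using True unfolding t_def by (auto simp: field_simps)
  then show ?thesis using amgm[of t] by simp
next
  case False
  then have "a * s = 0" using assms(2,3) by auto
  show ?thesis
  proof (rule ccontr)
    assume "\<not> ?thesis"
    then have b: "\<bar>b\<bar> > 0" using \<open>a * s = 0\<close> by (auto simp: real_sqrt_mult[symmetric])
    \<comment> \<open>one of the two terms vanishes; make the other one smaller than \<open>\<bar>b\<bar>\<close>\<close>
    define t where "t = (if a = 0 then (s + 1) / \<bar>b\<bar> else \<bar>b\<bar> / (a + 1))"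
    have t: "t > 0" using b assms(2,3) by (simp add: t_def)
    have "t * a + s / t < 2 * \<bar>b\<bar>"
    proof (cases "a = 0")
      case True
      then have "t * a + s / t = s * \<bar>b\<bar> / (s + 1)" by (simp add: t_def)
      also have "\<dots> < 2 * \<bar>b\<bar>" using b assms(3) by (simp add: field_simps add_nonneg_pos)
      finally show ?thesis .
    next
      case False
      then have "t * a + s / t = \<bar>b\<bar> * a / (a + 1)" using \<open>a * s = 0\<close> by (simp add: t_def)
      also have "\<dots> < 2 * \<bar>b\<bar>" using b assms(2) by (simp add: field_simps add_nonneg_pos)
      finally show ?thesis .
    qed
    then show False using amgm[OF t] by simp
  qed
qed

lemma psd_matrix_cauchy_schwarz:
  fixes M :: "real^'n^'n"
  assumes sym: "transpose M = M" and psd: "\<forall>\<xi>. 0 \<le> \<xi> \<bullet> (M *v \<xi>)"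
  shows "\<bar>(M *v x) \<bullet> y\<bar> \<le> sqrt ((M *v x) \<bullet> x) * sqrt ((M *v y) \<bullet> y)"
proof (rule abs_le_sqrt_mult_sqrtI)
  have symm: "(M *v y) \<bullet> x = (M *v x) \<bullet> y"
    by (metis dot_lmul_matrix inner_commute sym vector_transpose_matrix)
  have expand: "(M *v (t *\<^sub>R x + e *\<^sub>R y)) \<bullet> (t *\<^sub>R x + e *\<^sub>R y)
      = t * t * ((M *v x) \<bullet> x) + 2 * t * e * ((M *v x) \<bullet> y) + e * e * ((M *v y) \<bullet> y)" for t e
    using symm by (simp add: matrix_vector_right_distrib matrix_vector_mult_scaleR
        inner_add_left inner_add_right algebra_simps)
  fix t :: real assume t: "t > 0"
  have "0 \<le> t * t * ((M *v x) \<bullet> x) + 2 * t * e * ((M *v x) \<bullet> y) + e * e * ((M *v y) \<bullet> y)" for e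
    using psd expand[of t e] by (metis inner_commute)
  from this[of 1] this[of "-1"]
  have "2 * t * \<bar>(M *v x) \<bullet> y\<bar> \<le> t * t * ((M *v x) \<bullet> x) + (M *v y) \<bullet> y"
    by (simp add: abs_if)
  then show "2 * \<bar>(M *v x) \<bullet> y\<bar> \<le> t * ((M *v x) \<bullet> x) + ((M *v y) \<bullet> y) / t"
    using t by (simp add: divide_simps) (simp add: algebra_simps)
next
  show "0 \<le> (M *v x) \<bullet> x" "0 \<le> (M *v y) \<bullet> y" using psd by (simp_all add: inner_commute)
qed

lemma integral_cauchy_schwarz:
  fixes a b h :: "'a \<Rightarrow> real"
  assumes ia: "integrable M a" and ib: "integrable M b" and ih: "integrable M h"
    and a0: "AE x in M. 0 \<le> a x" and b0: "AE x in M. 0 \<le> b x"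
    and hb: "AE x in M. \<bar>h x\<bar> \<le> sqrt (a x) * sqrt (b x)"
  shows "\<bar>LINT x|M. h x\<bar> \<le> sqrt (LINT x|M. a x) * sqrt (LINT x|M. b x)"
proof (rule abs_le_sqrt_mult_sqrtI)
  fix t :: real assume t: "t > 0"
  have pointwise: "AE x in M. 2 * \<bar>h x\<bar> \<le> t * a x + b x / t"
    using a0 b0 hb
  proof eventually_elim
    case (elim x)
    have "2 * \<bar>h x\<bar> \<le> 2 * sqrt (a x) * sqrt (b x)" using elim by simp
    also have "\<dots> \<le> t * (sqrt (a x))\<^sup>2 + (sqrt (b x))\<^sup>2 / t" by (rule two_mult_le_scaled_squares[OF t])
    finally show ?case using elim by simp
  qed
  have ig: "integrable M (\<lambda>x. t * a x + b x / t)" using ia ib by auto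
  have "(LINT x|M. 2 * h x) \<le> (LINT x|M. t * a x + b x / t)"
    "(LINT x|M. - (2 * h x)) \<le> (LINT x|M. t * a x + b x / t)"
    by (rule integral_mono_AE; use ih ig pointwise in auto)+
  moreover have "(LINT x|M. t * a x + b x / t) = t * (LINT x|M. a x) + (LINT x|M. b x) / t"
    using ia ib by simp
  ultimately show "2 * \<bar>LINT x|M. h x\<bar> \<le> t * (LINT x|M. a x) + (LINT x|M. b x) / t"
    by (simp add: abs_if)
next
  show "0 \<le> (LINT x|M. a x)" "0 \<le> (LINT x|M. b x)"
    using a0 b0 by (simp_all add: integral_nonneg_AE)
qed

lemma integrable_mult_bounded:
  fixes f h :: "'a \<Rightarrow> real"
  assumes "integrable M f" "h \<in> borel_measurable M" "AE x in M. \<bar>h x\<bar> \<le> K"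
  shows "integrable M (\<lambda>x. h x * f x)"
proof (rule Bochner_Integration.integrable_bound)
  show "integrable M (\<lambda>x. \<bar>K\<bar> * f x)" using assms(1) by auto
  show "(\<lambda>x. h x * f x) \<in> borel_measurable M" using assms by measurable
  show "AE x in M. norm (h x * f x) \<le> norm (\<bar>K\<bar> * f x)"
    using assms(3) by eventually_elim (auto simp: abs_mult intro: mult_right_mono)
qed

lemma integrable_mult_L2:
  assumes "L2 M f" "L2 M g"
  shows "integrable M (\<lambda>x. f x * g x)"
proof (rule Bochner_Integration.integrable_bound)
  show "integrable M (\<lambda>x. (f x)\<^sup>2 + (g x)\<^sup>2)" using assms unfolding L2_def by auto
  show "(\<lambda>x. f x * g x) \<in> borel_measurable M"
    using assms unfolding L2_def by (intro borel_measurable_times) auto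
  show "AE x in M. norm (f x * g x) \<le> norm ((f x)\<^sup>2 + (g x)\<^sup>2)"
  proof (rule AE_I2)
    fix x
    have "2 * (\<bar>f x\<bar> * \<bar>g x\<bar>) \<le> (f x)\<^sup>2 + (g x)\<^sup>2"
      using two_mult_le_scaled_squares[of 1 "\<bar>f x\<bar>" "\<bar>g x\<bar>"] by simp
    then have "\<bar>f x\<bar> * \<bar>g x\<bar> \<le> (f x)\<^sup>2 + (g x)\<^sup>2"
      using mult_nonneg_nonneg[OF abs_ge_zero abs_ge_zero, of "f x" "g x"] by linarith
    then show "norm (f x * g x) \<le> norm ((f x)\<^sup>2 + (g x)\<^sup>2)"
      by (simp add: abs_mult)
  qed
qed

lemma L2_add:
  assumes "L2 M f" "L2 M g"
  shows "L2 M (\<lambda>x. f x + g x)"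
proof -
  have "integrable M (\<lambda>x. (f x)\<^sup>2 + (g x)\<^sup>2 + 2 * (f x * g x))"
    using assms integrable_mult_L2[OF assms] unfolding L2_def by auto
  then show ?thesis
    using assms unfolding L2_def by (auto simp: power2_sum mult.assoc intro: borel_measurable_add)
qed

lemma L2_cmult: "L2 M f \<Longrightarrow> L2 M (\<lambda>x. k * f x)"
  unfolding L2_def by (auto simp: power_mult_distrib)

lemma L2_diff: "L2 M f \<Longrightarrow> L2 M g \<Longrightarrow> L2 M (\<lambda>x. f x - g x)"
  using L2_add[of M f "\<lambda>x. -1 * g x"] L2_cmult[of M g "-1"] by simp

lemma L2_mult_bounded:
  assumes "L2 M f" "h \<in> borel_measurable M" "AE x in M. \<bar>h x\<bar> \<le> K"
  shows "L2 M (\<lambda>x. h x * f x)"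
proof -
  have "integrable M (\<lambda>x. h x * (h x * (f x)\<^sup>2))"
    by (rule integrable_mult_bounded[OF integrable_mult_bounded]) (use assms in \<open>auto simp: L2_def\<close>)
  then show ?thesis
    using assms unfolding L2_def by (auto simp: power2_eq_square algebra_simps intro: borel_measurable_times)
qed

lemma L2norm_nonneg: "0 \<le> L2norm M f"
  unfolding L2norm_def by (simp add: integral_nonneg_AE)

lemma L2_inner_abs_le:
  assumes "L2 M f" "L2 M g"
  shows "\<bar>LINT x|M. f x * g x\<bar> \<le> L2norm M f * L2norm M g"
  unfolding L2norm_def
  by (rule integral_cauchy_schwarz) (use assms integrable_mult_L2 in \<open>auto simp: L2_def abs_mult\<close>)

lemma integrable_inner_L2:
  fixes F G :: "'a \<Rightarrow> real^'n"
  assumes "\<forall>i. L2 M (\<lambda>x. F x $ i)" "\<forall>i. L2 M (\<lambda>x. G x $ i)"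
  shows "integrable M (\<lambda>x. F x \<bullet> G x)"
  using assms by (simp add: inner_vec_def integrable_mult_L2)

lemma integrable_matrix_inner_L2:
  fixes F G :: "'a \<Rightarrow> real^'n" and A :: "'a \<Rightarrow> real^'n^'n"
  assumes A: "\<forall>i j. (\<lambda>x. A x $ i $ j) \<in> borel_measurable M \<and> (\<exists>K. AE x in M. \<bar>A x $ i $ j\<bar> \<le> K)"
    and "\<forall>i. L2 M (\<lambda>x. F x $ i)" "\<forall>i. L2 M (\<lambda>x. G x $ i)"
  shows "integrable M (\<lambda>x. (A x *v F x) \<bullet> G x)"
proof -
  have "integrable M (\<lambda>x. A x $ i $ j * (F x $ j * G x $ i))" for i j
  proof -
    obtain K where "AE x in M. \<bar>A x $ i $ j\<bar> \<le> K" using A by blast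
    then show ?thesis using assms by (intro integrable_mult_bounded integrable_mult_L2) auto
  qed
  then show ?thesis
    by (simp add: inner_vec_def matrix_vector_mult_def sum_distrib_right mult.assoc)
qed

lemma H1_0_imp_L2: "v \<in> H1_0 \<Omega> \<Gamma>D \<Longrightarrow> L2 (lebesgue_on \<Omega>) v"
  by (simp add: H1_0_def H1_def)

lemma H1_0_imp_L2_wgrad:
  assumes "v \<in> H1_0 \<Omega> \<Gamma>D"
  shows "\<forall>i. L2 (lebesgue_on \<Omega>) (\<lambda>x. wgrad \<Omega> v x $ i)"
proof -
  obtain G where "weak_grad \<Omega> v G" using assms by (auto simp: H1_0_def H1_def)
  then have "weak_grad \<Omega> v (wgrad \<Omega> v)" unfolding wgrad_def by (metis someI)
  then show ?thesis by (simp add: weak_grad_def)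
qed

lemma invertible_if_coercive:
  fixes M :: "real^'n^'n"
  assumes "\<theta> > 0" "\<forall>\<xi>. \<theta> * (norm \<xi>)\<^sup>2 \<le> \<xi> \<bullet> (M *v \<xi>)"
  shows "invertible M"
proof -
  have "x = 0" if "M *v x = 0" for x
  proof -
    have "\<theta> * (norm x)\<^sup>2 \<le> 0" using assms(2) that by (metis inner_zero_right)
    then show "x = 0" using assms(1) by (simp add: mult_le_0_iff)
  qed
  then show ?thesis using matrix_left_invertible_ker invertible_left_inverse by blast
qed

lemma matrix_inv_mult_vec_right:
  fixes M :: "real^'n^'n"
  assumes "invertible M"
  shows "M *v (matrix_inv M *v y) = y"
proof -
  have "M ** matrix_inv M = mat 1"
    using assms unfolding matrix_inv_def invertible_def by (rule someI2_ex) auto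
  then show ?thesis by (simp add: matrix_vector_mul_assoc)
qed

text \<open>On singular matrices \<open>matrix_inv\<close> is a junk value independent of the matrix, so
  \<open>x \<mapsto> matrix_inv (A x)\<close> stays measurable even where \<open>A x\<close> degenerates.\<close>

lemma matrix_inv_singular:
  fixes M :: "real^'n^'n"
  assumes "\<not> invertible M"
  shows "matrix_inv M = (SOME N :: real^'n^'n. False)"
proof -
  have "(\<lambda>N. M ** N = mat 1 \<and> N ** M = mat 1) = (\<lambda>N. False)"
    using assms by (auto simp: invertible_def)
  then show ?thesis by (simp add: matrix_inv_def)
qed

lemma coercive_matrix_inv_mult_vec_le:
  fixes M :: "real^'n^'n"
  assumes "\<theta> > 0" and coercive: "\<forall>\<xi>. \<theta> * (norm \<xi>)\<^sup>2 \<le> \<xi> \<bullet> (M *v \<xi>)"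
  shows "norm (matrix_inv M *v y) \<le> norm y / \<theta>"
proof -
  define z where "z = matrix_inv M *v y"
  have "\<theta> * (norm z)\<^sup>2 \<le> z \<bullet> y"
    using coercive matrix_inv_mult_vec_right[OF invertible_if_coercive[OF assms]]
    unfolding z_def by metis
  also have "\<dots> \<le> norm z * norm y" by (rule norm_cauchy_schwarz)
  finally have "\<theta> * norm z \<le> norm y"
    by (cases "z = 0") (simp_all add: power2_eq_square)
  then show ?thesis using assms(1) unfolding z_def by (simp add: field_simps)
qed

lemma borel_measurable_det:
  fixes F :: "'a \<Rightarrow> real^'n^'n"
  assumes "\<And>i j. (\<lambda>x. F x $ i $ j) \<in> borel_measurable M"
  shows "(\<lambda>x. det (F x)) \<in> borel_measurable M"
  unfolding det_def using assms by measurable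

lemma borel_measurable_matrix_inv_mult_vec:
  fixes A :: "'a \<Rightarrow> real^'n^'n" and q :: "'a \<Rightarrow> real^'n"
  assumes A: "\<And>i j. (\<lambda>x. A x $ i $ j) \<in> borel_measurable M"
    and q: "\<And>i. (\<lambda>x. q x $ i) \<in> borel_measurable M"
  shows "(\<lambda>x. (matrix_inv (A x) *v q x) $ k) \<in> borel_measurable M"
proof -
  define cramer_k where
    "cramer_k x = det (\<chi> i j. if j = k then q x $ i else A x $ i $ j) / det (A x)" for x
  have eq: "(matrix_inv (A x) *v q x) $ k
      = (if det (A x) \<noteq> 0 then cramer_k x else ((SOME N :: real^'n^'n. False) *v q x) $ k)" for x
    using cramer matrix_inv_mult_vec_right matrix_inv_singular invertible_det_nz
    unfolding cramer_k_def by fastforce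
  have "cramer_k \<in> borel_measurable M"
    unfolding cramer_k_def using A q by (intro borel_measurable_divide borel_measurable_det) auto
  moreover have "(\<lambda>x. ((SOME N :: real^'n^'n. False) *v q x) $ k) \<in> borel_measurable M"
    unfolding matrix_vector_mult_def using q by simp
  moreover have "(\<lambda>x. det (A x)) \<in> borel_measurable M" using A by (rule borel_measurable_det)
  ultimately show ?thesis unfolding eq by measurable
qed

lemma L2_matrix_inv_mult_vec:
  fixes A :: "'a \<Rightarrow> real^'n^'n" and q :: "'a \<Rightarrow> real^'n"
  assumes A: "\<And>i j. (\<lambda>x. A x $ i $ j) \<in> borel_measurable M"
    and "\<theta> > 0" and coercive: "AE x in M. \<forall>\<xi>. \<theta> * (norm \<xi>)\<^sup>2 \<le> \<xi> \<bullet> (A x *v \<xi>)"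
    and q: "\<forall>i. L2 M (\<lambda>x. q x $ i)"
  shows "L2 M (\<lambda>x. (matrix_inv (A x) *v q x) $ j)"
proof -
  let ?B = "\<lambda>x. (matrix_inv (A x) *v q x) $ j"
  have meas: "?B \<in> borel_measurable M"
    using A q by (intro borel_measurable_matrix_inv_mult_vec) (auto simp: L2_def)
  have "integrable M (\<lambda>x. (?B x)\<^sup>2)"
  proof (rule Bochner_Integration.integrable_bound)
    show "integrable M (\<lambda>x. (\<Sum>i\<in>UNIV. (q x $ i)\<^sup>2) / \<theta>\<^sup>2)" using q by (auto simp: L2_def)
    show "(\<lambda>x. (?B x)\<^sup>2) \<in> borel_measurable M" using meas by measurable
    show "AE x in M. norm ((?B x)\<^sup>2) \<le> norm ((\<Sum>i\<in>UNIV. (q x $ i)\<^sup>2) / \<theta>\<^sup>2)"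
      using coercive
    proof eventually_elim
      case (elim x)
      have "\<bar>?B x\<bar> \<le> norm (q x) / \<theta>"
        using component_le_norm_cart coercive_matrix_inv_mult_vec_le[OF \<open>\<theta> > 0\<close> elim] order_trans
        by blast
      then have "(?B x)\<^sup>2 \<le> (norm (q x) / \<theta>)\<^sup>2" by (metis abs_ge_zero power2_abs power_mono)
      also have "\<dots> = (\<Sum>i\<in>UNIV. (q x $ i)\<^sup>2) / \<theta>\<^sup>2"
        by (simp add: power_divide norm_vec_def L2_set_def sum_nonneg)
      finally show ?case by (simp add: sum_nonneg)
    qed
  qed
  then show ?thesis using meas by (simp add: L2_def)
qed

lemma coercive_matrix_nonneg:
  fixes M :: "real^'n^'n"
  assumes "\<theta> > 0" "\<forall>\<xi>. \<theta> * (norm \<xi>)\<^sup>2 \<le> \<xi> \<bullet> (M *v \<xi>)"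
  shows "0 \<le> (M *v z) \<bullet> z"
proof -
  have "0 \<le> \<theta> * (norm z)\<^sup>2" using assms(1) by simp
  also have "\<dots> \<le> z \<bullet> (M *v z)" using assms(2) by blast
  finally show ?thesis by (simp add: inner_commute)
qed

lemma energy_nonneg:
  fixes A :: "'a \<Rightarrow> real^'n^'n"
  assumes "\<theta> > 0" "AE x in M. \<forall>\<xi>. \<theta> * (norm \<xi>)\<^sup>2 \<le> \<xi> \<bullet> (A x *v \<xi>)"
  shows "0 \<le> (LINT x|M. (A x *v F x) \<bullet> F x)"
  using assms(2) by (intro integral_nonneg_AE, eventually_elim) (rule coercive_matrix_nonneg[OF assms(1)])

lemma energy_le_aform:
  assumes "AE x in lebesgue_on \<Omega>. 0 \<le> c x" "AE x in surface \<Omega>. x \<in> \<Gamma>N \<longrightarrow> 0 \<le> \<alpha> x"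
  shows "(LINT x|lebesgue_on \<Omega>. (A x *v wgrad \<Omega> v x) \<bullet> wgrad \<Omega> v x) \<le> aform \<Omega> A c \<alpha> \<Gamma>N v v"
proof -
  have "0 \<le> (LINT x|lebesgue_on \<Omega>. c x * v x * v x)"
    using assms(1) by (intro integral_nonneg_AE, eventually_elim) (simp add: mult.assoc)
  moreover have "0 \<le> (LINT x|surface \<Omega>. indicator \<Gamma>N x * \<alpha> x * tr \<Omega> v x * tr \<Omega> v x)"
    using assms(2) by (intro integral_nonneg_AE, eventually_elim) (auto simp: indicator_def mult.assoc)
  ultimately show ?thesis unfolding aform_def by simp
qed

lemma Anorm_nonneg:
  assumes "\<theta> > 0" "AE x in lebesgue_on \<Omega>. \<forall>\<xi>. \<theta> * (norm \<xi>)\<^sup>2 \<le> \<xi> \<bullet> (A x *v \<xi>)"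
  shows "0 \<le> Anorm \<Omega> A F"
  unfolding Anorm_def using energy_nonneg[OF assms] by simp

lemma aform_nonneg:
  assumes "\<theta> > 0" "AE x in lebesgue_on \<Omega>. \<forall>\<xi>. \<theta> * (norm \<xi>)\<^sup>2 \<le> \<xi> \<bullet> (A x *v \<xi>)"
    and "AE x in lebesgue_on \<Omega>. 0 \<le> c x" "AE x in surface \<Omega>. x \<in> \<Gamma>N \<longrightarrow> 0 \<le> \<alpha> x"
  shows "0 \<le> aform \<Omega> A c \<alpha> \<Gamma>N v v"
  using energy_nonneg[OF assms(1,2)] energy_le_aform[OF assms(3,4)] by (rule order_trans)

lemma Anorm_wgrad_le_sqrt_aform:
  assumes "AE x in lebesgue_on \<Omega>. 0 \<le> c x" "AE x in surface \<Omega>. x \<in> \<Gamma>N \<longrightarrow> 0 \<le> \<alpha> x"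
  shows "Anorm \<Omega> A (wgrad \<Omega> v) \<le> sqrt (aform \<Omega> A c \<alpha> \<Gamma>N v v)"
  unfolding Anorm_def using energy_le_aform[OF assms] by simp

lemma least_bound_constant_nonneg:
  fixes f g :: "'a \<Rightarrow> real"
  assumes bound: "\<forall>v\<in>V. f v \<le> C * g v"
    and least: "\<forall>C'. (\<forall>v\<in>V. f v \<le> C' * g v) \<longrightarrow> C \<le> C'"
    and nonneg: "\<And>v. v \<in> V \<Longrightarrow> 0 \<le> f v" "\<And>v. v \<in> V \<Longrightarrow> 0 \<le> g v"
  shows "0 \<le> C"
proof (rule ccontr)
  assume "\<not> 0 \<le> C"
  have "g v = 0 \<and> f v = 0" if "v \<in> V" for v
  proof -
    have "C * g v \<le> 0" using \<open>\<not> 0 \<le> C\<close> nonneg(2)[OF that] by (simp add: mult_nonpos_nonneg)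
    moreover have "f v \<le> C * g v" using bound that by blast
    ultimately have "C * g v = 0" "f v = 0" using nonneg(1)[OF that] by linarith+
    then show ?thesis using \<open>\<not> 0 \<le> C\<close> by simp
  qed
  then have "\<forall>v\<in>V. f v \<le> (C - 1) * g v" by simp
  then show False using least by fastforce
qed

lemma aform_eq_flux_residual:
  fixes A :: "real^'d::finite \<Rightarrow> real^'d^'d" and q :: "real^'d \<Rightarrow> real^'d"
  assumes A_Linf: "\<forall>i j. (\<lambda>x. A x $ i $ j) \<in> borel_measurable (lebesgue_on \<Omega>) \<and>
                   (\<exists>M. AE x in lebesgue_on \<Omega>. \<bar>A x $ i $ j\<bar> \<le> M)"
    and c_Linf: "c \<in> borel_measurable (lebesgue_on \<Omega>)" "AE x in lebesgue_on \<Omega>. \<bar>c x\<bar> \<le> K"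
    and u: "u \<in> H1_0 \<Omega> \<Gamma>D" and w: "w \<in> H1_0 \<Omega> \<Gamma>D" and qD: "Hdiv \<Omega> q D"
    and w_eq: "aform \<Omega> A c \<alpha> \<Gamma>N w w
                 = aform \<Omega> A c \<alpha> \<Gamma>N u w - lam * (LINT x|lebesgue_on \<Omega>. u x * w x)"
    and flux: "(LINT x|lebesgue_on \<Omega>. q x \<bullet> wgrad \<Omega> w x) + (LINT x|lebesgue_on \<Omega>. D x * w x)
                 = - (LINT x|surface \<Omega>. indicator \<Gamma>N x * \<alpha> x * tr \<Omega> u x * tr \<Omega> w x)"
  shows "aform \<Omega> A c \<alpha> \<Gamma>N w w
    = (LINT x|lebesgue_on \<Omega>. (A x *v wgrad \<Omega> u x - q x) \<bullet> wgrad \<Omega> w x)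
      - (LINT x|lebesgue_on \<Omega>. (lam * u x - c x * u x + D x) * w x)"
proof -
  let ?M = "lebesgue_on \<Omega>" and ?Gu = "wgrad \<Omega> u" and ?Gw = "wgrad \<Omega> w"
  have Lu: "L2 ?M u" and Lw: "L2 ?M w" using H1_0_imp_L2[OF u] H1_0_imp_L2[OF w] .
  have LGu: "\<forall>i. L2 ?M (\<lambda>x. ?Gu x $ i)" and LGw: "\<forall>i. L2 ?M (\<lambda>x. ?Gw x $ i)"
    using H1_0_imp_L2_wgrad[OF u] H1_0_imp_L2_wgrad[OF w] .
  have Lq: "\<forall>i. L2 ?M (\<lambda>x. q x $ i)" and LD: "L2 ?M D" using qD by (auto simp: Hdiv_def)
  have "integrable ?M (\<lambda>x. (A x *v ?Gu x) \<bullet> ?Gw x)" "integrable ?M (\<lambda>x. q x \<bullet> ?Gw x)"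
    using integrable_matrix_inner_L2[OF A_Linf LGu LGw] integrable_inner_L2[OF Lq LGw] .
  then have flux_term: "(LINT x|?M. (A x *v ?Gu x - q x) \<bullet> ?Gw x)
      = (LINT x|?M. (A x *v ?Gu x) \<bullet> ?Gw x) - (LINT x|?M. q x \<bullet> ?Gw x)"
    by (simp add: inner_diff_left)
  have uw: "integrable ?M (\<lambda>x. u x * w x)" and Dw: "integrable ?M (\<lambda>x. D x * w x)"
    using Lu Lw LD by (simp_all add: integrable_mult_L2)
  have "integrable ?M (\<lambda>x. c x * (u x * w x))"
    using uw c_Linf by (rule integrable_mult_bounded)
  then have "(LINT x|?M. (lam * u x - c x * u x + D x) * w x)
      = lam * (LINT x|?M. u x * w x) - (LINT x|?M. c x * u x * w x) + (LINT x|?M. D x * w x)"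
    using uw Dw by (simp add: algebra_simps)
  then show ?thesis using w_eq flux flux_term unfolding aform_def by linarith
qed

lemma flux_term_le:
  fixes A :: "real^'d::finite \<Rightarrow> real^'d^'d" and F G q :: "real^'d \<Rightarrow> real^'d"
  assumes A_Linf: "\<forall>i j. (\<lambda>x. A x $ i $ j) \<in> borel_measurable (lebesgue_on \<Omega>) \<and>
                   (\<exists>M. AE x in lebesgue_on \<Omega>. \<bar>A x $ i $ j\<bar> \<le> M)"
    and A_sym: "AE x in lebesgue_on \<Omega>. transpose (A x) = A x"
    and "\<theta> > 0" and coercive: "AE x in lebesgue_on \<Omega>. \<forall>\<xi>. \<theta> * (norm \<xi>)\<^sup>2 \<le> \<xi> \<bullet> (A x *v \<xi>)"
    and LF: "\<forall>i. L2 (lebesgue_on \<Omega>) (\<lambda>x. F x $ i)"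
    and Lq: "\<forall>i. L2 (lebesgue_on \<Omega>) (\<lambda>x. q x $ i)"
    and LG: "\<forall>i. L2 (lebesgue_on \<Omega>) (\<lambda>x. G x $ i)"
  shows "\<bar>LINT x|lebesgue_on \<Omega>. (A x *v F x - q x) \<bullet> G x\<bar>
    \<le> Anorm \<Omega> A (\<lambda>x. F x - matrix_inv (A x) *v q x) * Anorm \<Omega> A G"
proof -
  let ?M = "lebesgue_on \<Omega>" and ?e = "\<lambda>x. F x - matrix_inv (A x) *v q x"
  have "L2 ?M (\<lambda>x. (matrix_inv (A x) *v q x) $ i)" for i
    using A_Linf \<open>\<theta> > 0\<close> coercive Lq by (intro L2_matrix_inv_mult_vec) auto
  then have Le: "\<forall>i. L2 ?M (\<lambda>x. ?e x $ i)" using LF L2_diff by fastforce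
  have "integrable ?M (\<lambda>x. (A x *v F x) \<bullet> G x - q x \<bullet> G x)"
    using integrable_matrix_inner_L2[OF A_Linf LF LG] integrable_inner_L2[OF Lq LG] by simp
  then have "integrable ?M (\<lambda>x. (A x *v F x - q x) \<bullet> G x)" by (simp add: inner_diff_left)
  then show ?thesis
    unfolding Anorm_def
  proof (rule integral_cauchy_schwarz[rotated 2])
    show "integrable ?M (\<lambda>x. (A x *v ?e x) \<bullet> ?e x)"
      by (rule integrable_matrix_inner_L2[OF A_Linf Le Le])
    show "integrable ?M (\<lambda>x. (A x *v G x) \<bullet> G x)"
      by (rule integrable_matrix_inner_L2[OF A_Linf LG LG])
    show "AE x in ?M. 0 \<le> (A x *v ?e x) \<bullet> ?e x"
      using coercive by eventually_elim (rule coercive_matrix_nonneg[OF \<open>\<theta> > 0\<close>])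
    show "AE x in ?M. 0 \<le> (A x *v G x) \<bullet> G x"
      using coercive by eventually_elim (rule coercive_matrix_nonneg[OF \<open>\<theta> > 0\<close>])
    show "AE x in ?M. \<bar>(A x *v F x - q x) \<bullet> G x\<bar>
        \<le> sqrt ((A x *v ?e x) \<bullet> ?e x) * sqrt ((A x *v G x) \<bullet> G x)"
      using coercive A_sym
    proof eventually_elim
      case (elim x)
      have "A x *v (matrix_inv (A x) *v q x) = q x"
        using invertible_if_coercive[OF \<open>\<theta> > 0\<close> elim(1)] by (rule matrix_inv_mult_vec_right)
      then have "A x *v F x - q x = A x *v ?e x" by (simp add: matrix_vector_mult_diff_distrib)
      moreover have "\<forall>\<xi>. 0 \<le> \<xi> \<bullet> (A x *v \<xi>)"
        using coercive_matrix_nonneg[OF \<open>\<theta> > 0\<close> elim(1)] by (simp add: inner_commute)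
      ultimately show ?case using psd_matrix_cauchy_schwarz[OF elim(2)] by simp
    qed
  qed
qed

lemma sqrt_le_if_le_mult_sqrt:
  fixes a b :: real
  assumes "0 \<le> a" "0 \<le> b" "a \<le> b * sqrt a"
  shows "sqrt a \<le> b"
proof (cases "a = 0")
  case False
  then have "sqrt a * sqrt a \<le> b * sqrt a" "sqrt a > 0" using assms by simp_all
  then show ?thesis using mult_right_le_imp_le by blast
qed (use assms in simp)

theorem theorem4p3:
  fixes \<Omega> \<Gamma>D \<Gamma>N :: "(real^'d::finite) set"
    and A :: "real^'d \<Rightarrow> real^'d^'d"
    and c \<alpha> :: "real^'d \<Rightarrow> real"
    and C_F lam :: real
    and u w :: "real^'d \<Rightarrow> real"
  assumes dom: "lipschitz_domain \<Omega>"
    and bdry: "\<Gamma>D \<subseteq> frontier \<Omega>" "\<Gamma>N \<subseteq> frontier \<Omega>"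
      "openin (top_of_set (frontier \<Omega>)) \<Gamma>D" "openin (top_of_set (frontier \<Omega>)) \<Gamma>N"
      "\<Gamma>D \<inter> \<Gamma>N = {}" "closure \<Gamma>D \<union> closure \<Gamma>N = frontier \<Omega>"
    and A_Linf: "\<forall>i j. (\<lambda>x. A x $ i $ j) \<in> borel_measurable (lebesgue_on \<Omega>) \<and>
                   (\<exists>M. AE x in lebesgue_on \<Omega>. \<bar>A x $ i $ j\<bar> \<le> M)"
    and A_sym: "AE x in lebesgue_on \<Omega>. transpose (A x) = A x"
    and A_pd: "\<exists>\<theta>>0. AE x in lebesgue_on \<Omega>. \<forall>\<xi>. \<theta> * (norm \<xi>)^2 \<le> \<xi> \<bullet> (A x *v \<xi>)"
    and c_Linf: "c \<in> borel_measurable (lebesgue_on \<Omega>)" "\<exists>M. AE x in lebesgue_on \<Omega>. \<bar>c x\<bar> \<le> M"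
    and c_nonneg: "AE x in lebesgue_on \<Omega>. 0 \<le> c x"
    and \<alpha>_Linf: "\<alpha> \<in> borel_measurable (restrict_space (surface \<Omega>) \<Gamma>N)"
      "\<exists>M. AE x in surface \<Omega>. x \<in> \<Gamma>N \<longrightarrow> \<bar>\<alpha> x\<bar> \<le> M"
    and \<alpha>_nonneg: "AE x in surface \<Omega>. x \<in> \<Gamma>N \<longrightarrow> 0 \<le> \<alpha> x"
    and a_scalar: "\<forall>v\<in>H1_0 \<Omega> \<Gamma>D. aform \<Omega> A c \<alpha> \<Gamma>N v v = 0 \<longrightarrow> (AE x in lebesgue_on \<Omega>. v x = 0)"
    and CF: "\<forall>v\<in>H1_0 \<Omega> \<Gamma>D. L2norm (lebesgue_on \<Omega>) v \<le> C_F * sqrt (aform \<Omega> A c \<alpha> \<Gamma>N v v)"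
      "\<forall>C. (\<forall>v\<in>H1_0 \<Omega> \<Gamma>D. L2norm (lebesgue_on \<Omega>) v \<le> C * sqrt (aform \<Omega> A c \<alpha> \<Gamma>N v v)) \<longrightarrow> C_F \<le> C"
    and u: "u \<in> H1_0 \<Omega> \<Gamma>D"
    and w: "w \<in> H1_0 \<Omega> \<Gamma>D"
    and w_eq: "\<forall>v\<in>H1_0 \<Omega> \<Gamma>D. aform \<Omega> A c \<alpha> \<Gamma>N w v
                 = aform \<Omega> A c \<alpha> \<Gamma>N u v - lam * (LINT x|lebesgue_on \<Omega>. u x * v x)"
  shows "\<forall>q D. Hdiv \<Omega> q D \<and>
            (\<forall>v\<in>H1_0 \<Omega> \<Gamma>D. (LINT x|lebesgue_on \<Omega>. q x \<bullet> wgrad \<Omega> v x) + (LINT x|lebesgue_on \<Omega>. D x * v x)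
                 = - (LINT x|surface \<Omega>. indicator \<Gamma>N x * \<alpha> x * tr \<Omega> u x * tr \<Omega> v x))
         \<longrightarrow> sqrt (aform \<Omega> A c \<alpha> \<Gamma>N w w)
             \<le> Anorm \<Omega> A (\<lambda>x. wgrad \<Omega> u x - matrix_inv (A x) *v q x)
               + C_F * L2norm (lebesgue_on \<Omega>) (\<lambda>x. lam * u x - c x * u x + D x)"
proof (intro allI impI)
  fix q :: "real^'d \<Rightarrow> real^'d" and D :: "real^'d \<Rightarrow> real"
  assume qD_flux: "Hdiv \<Omega> q D \<and> (\<forall>v\<in>H1_0 \<Omega> \<Gamma>D. (LINT x|lebesgue_on \<Omega>. q x \<bullet> wgrad \<Omega> v x)
      + (LINT x|lebesgue_on \<Omega>. D x * v x)
      = - (LINT x|surface \<Omega>. indicator \<Gamma>N x * \<alpha> x * tr \<Omega> u x * tr \<Omega> v x))"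
  note qD = conjunct1[OF qD_flux]
  let ?M = "lebesgue_on \<Omega>" and ?a = "aform \<Omega> A c \<alpha> \<Gamma>N w w"
  let ?e = "\<lambda>x. wgrad \<Omega> u x - matrix_inv (A x) *v q x" and ?r = "\<lambda>x. lam * u x - c x * u x + D x"
  obtain \<theta> where "\<theta> > 0" and coercive: "AE x in ?M. \<forall>\<xi>. \<theta> * (norm \<xi>)\<^sup>2 \<le> \<xi> \<bullet> (A x *v \<xi>)"
    using A_pd by blast
  obtain K where c_bound: "AE x in ?M. \<bar>c x\<bar> \<le> K" using c_Linf(2) by blast
  note aform_nonneg = aform_nonneg[OF \<open>\<theta> > 0\<close> coercive c_nonneg \<alpha>_nonneg]
  have Lq: "\<forall>i. L2 ?M (\<lambda>x. q x $ i)" using qD by (simp add: Hdiv_def)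
  have L2_r: "L2 ?M ?r"
    using qD H1_0_imp_L2[OF u] L2_mult_bounded[OF H1_0_imp_L2[OF u] c_Linf(1) c_bound]
    by (intro L2_add L2_diff L2_cmult) (auto simp: Hdiv_def)
  have "?a = (LINT x|?M. (A x *v wgrad \<Omega> u x - q x) \<bullet> wgrad \<Omega> w x) - (LINT x|?M. ?r x * w x)"
    using w_eq conjunct2[OF qD_flux] w
    by (intro aform_eq_flux_residual[OF A_Linf c_Linf(1) c_bound u w qD]) auto
  also have "\<dots> \<le> Anorm \<Omega> A ?e * Anorm \<Omega> A (wgrad \<Omega> w) + L2norm ?M ?r * L2norm ?M w"
    using flux_term_le[OF A_Linf A_sym \<open>\<theta> > 0\<close> coercive
        H1_0_imp_L2_wgrad[OF u] Lq H1_0_imp_L2_wgrad[OF w]]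
      L2_inner_abs_le[OF L2_r H1_0_imp_L2[OF w]]
    by linarith
  also have "\<dots> \<le> Anorm \<Omega> A ?e * sqrt ?a + L2norm ?M ?r * (C_F * sqrt ?a)"
    using CF(1) w by (intro add_mono mult_left_mono Anorm_wgrad_le_sqrt_aform c_nonneg \<alpha>_nonneg
        Anorm_nonneg[OF \<open>\<theta> > 0\<close> coercive] L2norm_nonneg) auto
  finally have "?a \<le> (Anorm \<Omega> A ?e + C_F * L2norm ?M ?r) * sqrt ?a"
    by (simp add: algebra_simps)
  moreover have "0 \<le> C_F"
    using CF by (rule least_bound_constant_nonneg) (simp_all add: L2norm_nonneg aform_nonneg)
  ultimately show "sqrt ?a \<le> Anorm \<Omega> A ?e + C_F * L2norm ?M ?r"
    by (intro sqrt_le_if_le_mult_sqrt aform_nonneg add_nonneg_nonneg mult_nonneg_nonneg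
        Anorm_nonneg[OF \<open>\<theta> > 0\<close> coercive] L2norm_nonneg)
qed

end
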